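(* Let $Q\subset\mathbb{R}^n$ be compact and controlled invariant. Then $\lim_{\tau\searrow0}h_{\mathrm{rec}}(\tau,Q)=h_{\mathrm{inv}}(Q)$.
   Context: Control system $\dot x=f(x,u)$, $x\in\mathbb R^n$, $f$ locally Lipschitz, controls $u\in\mathcal U$ = piecewise continuous functions $\mathbb R_{\ge0}\to U$, $U\subset\mathbb R^m$ compact; $\xi(x,u,t)$ the solution; $N_\varepsilon(Q)=\{y:\exists x\in Q,\|x-y\|\le\varepsilon\}$; $\log$ base 2. Controlled invariant: for each $x\in Q$ some $u$ keeps $\xi(x,u,t)\in Q$ for all $t\ge0$. $S\subseteq\mathcal U$ is invariance $(T,\varepsilon,Q)$-spanning if for every $x\in Q$ some $u\in S$ has $\xi(x,u,t)\in N_\varepsilon(Q)$ for all $t\in[0,T]$; $r_{\mathrm{inv}}(T,\varepsilon,Q)$ minimal cardinality; $h_{\mathrm{inv}}(Q)=\lim_{\varepsilon\searrow0}\limsup_{T\to\infty}\frac1T\log r_{\mathrm{inv}}(T,\varepsilon,Q)$. A trajectory $\xi(x,u,\cdot)$ is $(T,\varepsilon,\tau,Q)$-recurrent ($T\ge\tau$) if for every $t\in[0,T-\tau]$ there is $t'\in[t,t+\tau]$ with $\xi(x,u,t')\in N_\varepsilon(Q)$. $S$ is recurrence $(T,\varepsilon,\tau,Q)$-spanning if for every $x\in Q$ some $u\in S$ makes $\xi(x,u,\cdot)$ $(T,\varepsilon,\tau,Q)$-recurrent; $r_{\mathrm{rec}}(T,\varepsilon,\tau,Q)$ minimal cardinality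 ($\infty$ if none); $h_{\mathrm{rec}}(\tau,Q)=\lim_{\varepsilon\searrow0}\limsup_{T\to\infty}\frac1T\log r_{\mathrm{rec}}(T,\varepsilon,\tau,Q)$. Standing assumption: for all $x\in Q,u\in\mathcal U$, $\xi(x,u,\cdot)$ is defined on $[0,\tau]$ and continuous in $x$. *)

theory Defs
  imports "HOL-Analysis.Analysis" "HOL-Library.Liminf_Limsup"
begin

definition loc_lipschitz :: "(real^'n \<Rightarrow> real^'m \<Rightarrow> real^'n) \<Rightarrow> bool" where
  "loc_lipschitz f \<longleftrightarrow>
     (\<forall>z. \<exists>\<delta>>0. \<exists>L. L-lipschitz_on (cball z \<delta>) (\<lambda>(x, v). f x v))"

definition piecewise_cont :: "(real \<Rightarrow> 'a::real_normed_vector) \<Rightarrow> bool" where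
  "piecewise_cont u \<longleftrightarrow>
     (\<forall>T\<ge>0. \<exists>D. finite D \<and> D \<subseteq> {0..T} \<and>
        (\<forall>t\<in>{0..T} - D. continuous (at t within {0..}) u) \<and>
        (\<forall>t\<in>D. (\<exists>l. (u \<longlongrightarrow> l) (at_right t)) \<and> (0 < t \<longrightarrow> (\<exists>l. (u \<longlongrightarrow> l) (at_left t)))))"

definition controls :: "(real^'m) set \<Rightarrow> (real \<Rightarrow> real^'m) set" where
  "controls U = {u. piecewise_cont u \<and> (\<forall>t\<ge>0. u t \<in> U)}"

text \<open>y is the (Caratheodory) solution xi(x,u,.) on the set S \<subseteq> [0,\<infinity>) containing 0:
  y(t) = x + int_0^t f(y(s),u(s)) ds.  By local Lipschitz continuity of f
  such a solution is unique, so "\<exists>y. is_sol \<dots>" expresses that xi(x,u,.) is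
  defined on S, and properties of that y are properties of xi(x,u,.).\<close>
definition is_sol ::
  "(real^'n \<Rightarrow> real^'m \<Rightarrow> real^'n) \<Rightarrow> real^'n \<Rightarrow> (real \<Rightarrow> real^'m) \<Rightarrow> real set \<Rightarrow> (real \<Rightarrow> real^'n) \<Rightarrow> bool"
  where
  "is_sol f x u S y \<longleftrightarrow> continuous_on S y \<and>
     (\<forall>t\<in>S. ((\<lambda>s. f (y s) (u s)) has_integral (y t - x)) {0..t})"

definition nbhd :: "real \<Rightarrow> (real^'n) set \<Rightarrow> (real^'n) set" where
  "nbhd \<epsilon> Q = {y. \<exists>x\<in>Q. norm (x - y) \<le> \<epsilon>}"

definition controlled_invariant ::
  "(real^'n \<Rightarrow> real^'m \<Rightarrow> real^'n) \<Rightarrow> (real^'m) set \<Rightarrow> (real^'n) set \<Rightarrow> bool" where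
  "controlled_invariant f U Q \<longleftrightarrow>
     (\<forall>x\<in>Q. \<exists>u\<in>controls U. \<exists>y. is_sol f x u {0..} y \<and> (\<forall>t\<ge>0. y t \<in> Q))"

definition inv_spanning ::
  "(real^'n \<Rightarrow> real^'m \<Rightarrow> real^'n) \<Rightarrow> (real^'m) set \<Rightarrow> real \<Rightarrow> real \<Rightarrow> (real^'n) set
    \<Rightarrow> (real \<Rightarrow> real^'m) set \<Rightarrow> bool" where
  "inv_spanning f U T \<epsilon> Q S \<longleftrightarrow> S \<subseteq> controls U \<and>
     (\<forall>x\<in>Q. \<exists>u\<in>S. \<exists>y. is_sol f x u {0..T} y \<and> (\<forall>t\<in>{0..T}. y t \<in> nbhd \<epsilon> Q))"

text \<open>Minimal cardinality (\<infinity> if no finite spanning set exists).\<close>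
definition r_inv ::
  "(real^'n \<Rightarrow> real^'m \<Rightarrow> real^'n) \<Rightarrow> (real^'m) set \<Rightarrow> real \<Rightarrow> real \<Rightarrow> (real^'n) set \<Rightarrow> ereal" where
  "r_inv f U T \<epsilon> Q = (INF S \<in> {S. finite S \<and> inv_spanning f U T \<epsilon> Q S}. ereal (real (card S)))"

definition recurrent ::
  "(real^'n \<Rightarrow> real^'m \<Rightarrow> real^'n) \<Rightarrow> real^'n \<Rightarrow> (real \<Rightarrow> real^'m) \<Rightarrow> real \<Rightarrow> real \<Rightarrow> real
    \<Rightarrow> (real^'n) set \<Rightarrow> bool" where
  "recurrent f x u T \<epsilon> \<tau> Q \<longleftrightarrow> T \<ge> \<tau> \<and>
     (\<exists>y. is_sol f x u {0..T} y \<and>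
        (\<forall>t\<in>{0..T - \<tau>}. \<exists>t'\<in>{t..t + \<tau>}. y t' \<in> nbhd \<epsilon> Q))"

definition rec_spanning ::
  "(real^'n \<Rightarrow> real^'m \<Rightarrow> real^'n) \<Rightarrow> (real^'m) set \<Rightarrow> real \<Rightarrow> real \<Rightarrow> real \<Rightarrow> (real^'n) set
    \<Rightarrow> (real \<Rightarrow> real^'m) set \<Rightarrow> bool" where
  "rec_spanning f U T \<epsilon> \<tau> Q S \<longleftrightarrow> S \<subseteq> controls U \<and>
     (\<forall>x\<in>Q. \<exists>u\<in>S. recurrent f x u T \<epsilon> \<tau> Q)"

definition r_rec ::
  "(real^'n \<Rightarrow> real^'m \<Rightarrow> real^'n) \<Rightarrow> (real^'m) set \<Rightarrow> real \<Rightarrow> real \<Rightarrow> real \<Rightarrow> (real^'n) set \<Rightarrow> ereal" where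
  "r_rec f U T \<epsilon> \<tau> Q = (INF S \<in> {S. finite S \<and> rec_spanning f U T \<epsilon> \<tau> Q S}. ereal (real (card S)))"

definition elog2 :: "ereal \<Rightarrow> ereal" where
  "elog2 r = (if r = \<infinity> then \<infinity> else if r \<le> 0 then -\<infinity> else ereal (log 2 (real_of_ereal r)))"

definition h_inv ::
  "(real^'n \<Rightarrow> real^'m \<Rightarrow> real^'n) \<Rightarrow> (real^'m) set \<Rightarrow> (real^'n) set \<Rightarrow> ereal" where
  "h_inv f U Q = Lim (at_right 0)
     (\<lambda>\<epsilon>. Limsup at_top (\<lambda>T. ereal (1 / T) * elog2 (r_inv f U T \<epsilon> Q)))"

definition h_rec ::
  "(real^'n \<Rightarrow> real^'m \<Rightarrow> real^'n) \<Rightarrow> (real^'m) set \<Rightarrow> real \<Rightarrow> (real^'n) set \<Rightarrow> ereal" where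
  "h_rec f U \<tau> Q = Lim (at_right 0)
     (\<lambda>\<epsilon>. Limsup at_top (\<lambda>T. ereal (1 / T) * elog2 (r_rec f U T \<epsilon> \<tau> Q)))"

end

theory Submission
  imports Defs
begin

text \<open>Invariance-spanning sets are recurrence-spanning, so \<open>h_rec \<tau> \<le> h_inv\<close>. Conversely, with
  \<open>M\<close> a bound on \<open>\<parallel>f\<parallel>\<close> near \<open>Q \<times> U\<close>, a \<open>(T,\<epsilon>,\<tau>,Q)\<close>-recurrent trajectory is never more than
  time \<open>\<tau>\<close> away from \<open>N\<^sub>\<epsilon>(Q)\<close> and so stays in \<open>N\<^bsub>\<epsilon>+M\<tau>\<^esub>(Q)\<close>; hence recurrence-spanning sets
  for \<open>\<epsilon>\<close> are invariance-spanning for \<open>\<epsilon> + M\<tau>\<close>. Both entropies are suprema over \<open>\<epsilon>\<close> of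
  quantities antitone in \<open>\<epsilon>\<close>, and the shift \<open>M\<tau>\<close> disappears as \<open>\<tau> \<searrow> 0\<close>.\<close>

lemma is_sol_initial:
  assumes "is_sol f x u {0..T} y" "0 \<le> T"
  shows "y 0 = x"
proof -
  have "0 \<in> {0..T}" using assms(2) by simp
  then have "((\<lambda>s. f (y s) (u s)) has_integral (y 0 - x)) {0..0}"
    using assms(1) unfolding is_sol_def by blast
  moreover have "((\<lambda>s. f (y s) (u s)) has_integral 0) {0..(0::real)}"
    using has_integral_refl(1)[of _ "0::real"] by simp
  ultimately have "y 0 - x = 0" by (rule has_integral_unique)
  then show ?thesis by simp
qed

lemma is_sol_has_integral_between:
  assumes "is_sol f x u {0..T} y" "0 \<le> a" "a \<le> c" "c \<le> T"
  shows "((\<lambda>s. f (y s) (u s)) has_integral (y c - y a)) {a..c}"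
proof -
  let ?h = "\<lambda>s. f (y s) (u s)"
  have hc: "(?h has_integral (y c - x)) {0..c}" and ha: "(?h has_integral (y a - x)) {0..a}"
    using assms unfolding is_sol_def by auto
  have "?h integrable_on {a..c}"
    using integrable_subinterval_real[of ?h 0 c a c] hc assms by auto
  then have hac: "(?h has_integral integral {a..c} ?h) {a..c}" by auto
  have "(?h has_integral ((y a - x) + integral {a..c} ?h)) {0..c}"
    using has_integral_combine[OF _ _ ha hac] assms by auto
  then have "(y a - x) + integral {a..c} ?h = y c - x"
    using has_integral_unique[OF _ hc] by blast
  then have "integral {a..c} ?h = y c - y a" by (simp add: algebra_simps)
  then show ?thesis using hac by simp
qed

lemma continuous_bootstrap:
  fixes g :: "real \<Rightarrow> real"
  assumes cont: "continuous_on {a..b} g" and start: "g a < K"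
    and improve: "\<And>c. a \<le> c \<Longrightarrow> c \<le> b \<Longrightarrow> \<forall>q\<in>{a..c}. g q \<le> K \<Longrightarrow> g c < K"
  shows "\<forall>q\<in>{a..b}. g q < K"
proof (rule ccontr)
  define B where "B = {a..b} \<inter> g -` {K..}"
  assume "\<not> (\<forall>q\<in>{a..b}. g q < K)"
  then have B_ne: "B \<noteq> {}" unfolding B_def by force
  have bdd: "bdd_below B" unfolding B_def by (rule bdd_belowI[of _ a]) auto
  have "closed B" unfolding B_def by (rule continuous_closed_preimage[OF cont]) auto
  then have cB: "Inf B \<in> B" by (rule closed_contains_Inf[OF B_ne bdd])
  define c where "c = Inf B"
  have c: "a \<le> c" "c \<le> b" "K \<le> g c" using cB unfolding B_def c_def by auto
  have below: "g q < K" if "a \<le> q" "q < c" for q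
    using cInf_lower[OF _ bdd, of q] that c unfolding B_def c_def by force
  have "g c = K"
  proof (rule ccontr)
    assume "g c \<noteq> K"
    have "continuous_on {a..c} g" by (rule continuous_on_subset[OF cont]) (use c in auto)
    then obtain c1 where "a \<le> c1" "c1 \<le> c" "g c1 = K"
      using IVT'[of g a K c] start c \<open>g c \<noteq> K\<close> by force
    then show False using below[of c1] \<open>g c \<noteq> K\<close> by force
  qed
  moreover have "\<forall>q\<in>{a..c}. g q \<le> K"
    using below \<open>g c = K\<close> by (metis atLeastAtMost_iff order.order_iff_strict)
  ultimately show False using improve[OF c(1,2)] by simp
qed

text \<open>The speed bound \<open>M\<close> is only available inside \<open>N\<^sub>1(Q)\<close>; by continuity the solution cannot
  leave \<open>N\<^sub>1(Q)\<close> while \<open>\<epsilon> + M (b - a) < 1\<close>.\<close>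

lemma is_sol_displacement_bound:
  assumes speed: "\<forall>p\<in>nbhd 1 Q. \<forall>v\<in>U. norm (f p v) \<le> M" and "0 \<le> M"
    and sol: "is_sol f x u {0..T} y" and uU: "\<forall>t\<ge>0. u t \<in> U"
    and ab: "0 \<le> a" "a \<le> b" "b \<le> T"
    and ya: "y a \<in> nbhd \<epsilon> Q" and small: "\<epsilon> + M * (b - a) < 1"
  shows "norm (y b - y a) \<le> M * (b - a)"
proof -
  define g where "g r = norm (y r - y a)" for r
  obtain x0 where x0: "x0 \<in> Q" "norm (x0 - y a) \<le> \<epsilon>" using ya unfolding nbhd_def by auto
  have displacement: "g c \<le> M * (c - a)"
    if c: "a \<le> c" "c \<le> b" and near: "\<forall>q\<in>{a..c}. g q \<le> 1 - \<epsilon>" for c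
  proof -
    have "norm (f (y q) (u q)) \<le> M" if q: "q \<in> {a..c}" for q
    proof -
      have "norm (x0 - y q) \<le> norm (x0 - y a) + g q"
        using norm_triangle_ineq[of "x0 - y a" "y a - y q"]
        by (simp add: g_def norm_minus_commute)
      then have "y q \<in> nbhd 1 Q" using x0 near q unfolding nbhd_def by force
      then show ?thesis using speed uU q ab by auto
    qed
    then show ?thesis
      using has_integral_bound_real[OF \<open>0 \<le> M\<close> _ is_sol_has_integral_between[OF sol], of "{}" a c]
        ab c by (simp add: g_def)
  qed
  have "continuous_on {a..b} g"
    using sol ab unfolding g_def is_sol_def
    by (intro continuous_intros) (auto elim: continuous_on_subset)
  moreover have "g a < 1 - \<epsilon>"
    using small mult_nonneg_nonneg[OF \<open>0 \<le> M\<close>, of "b - a"] ab by (simp add: g_def)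
  moreover have "g c < 1 - \<epsilon>" if "a \<le> c" "c \<le> b" "\<forall>q\<in>{a..c}. g q \<le> 1 - \<epsilon>" for c
  proof -
    have "M * (c - a) \<le> M * (b - a)" using that \<open>0 \<le> M\<close> by (intro mult_left_mono) auto
    then show ?thesis using displacement[OF that] small by linarith
  qed
  ultimately have "\<forall>q\<in>{a..b}. g q \<le> 1 - \<epsilon>"
    using continuous_bootstrap[of a b g "1 - \<epsilon>"] by fastforce
  then show ?thesis using displacement[of b] ab by (simp add: g_def)
qed

lemma nbhd_mono: "e1 \<le> e2 \<Longrightarrow> nbhd e1 Q \<subseteq> nbhd e2 Q"
  unfolding nbhd_def by force

lemma nbhd_eq_sums:
  fixes Q :: "(real^'n) set"
  shows "nbhd e Q = {x + y | x y. x \<in> Q \<and> y \<in> cball 0 e}"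
proof safe
  fix z assume "z \<in> nbhd e Q"
  then obtain x where "x \<in> Q" "norm (x - z) \<le> e" unfolding nbhd_def by auto
  then show "\<exists>x y. z = x + y \<and> x \<in> Q \<and> y \<in> cball 0 e"
    by (intro exI[of _ x] exI[of _ "z - x"]) (auto simp: norm_minus_commute)
next
  fix x y :: "real^'n" assume "x \<in> Q" "y \<in> cball 0 e"
  then show "x + y \<in> nbhd e Q" unfolding nbhd_def by (intro CollectI bexI[of _ x]) auto
qed

lemma compact_nbhd: "compact Q \<Longrightarrow> compact (nbhd e Q)"
  unfolding nbhd_eq_sums by (rule compact_sums) simp_all

lemma loc_lipschitz_continuous: "loc_lipschitz f \<Longrightarrow> continuous_on UNIV (\<lambda>(x, v). f x v)"
proof (rule continuous_at_imp_continuous_on, rule ballI)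
  fix z assume "loc_lipschitz f"
  then obtain \<delta> L where "\<delta> > 0" "L-lipschitz_on (cball z \<delta>) (\<lambda>(x, v). f x v)"
    unfolding loc_lipschitz_def by blast
  then have "continuous_on (cball z \<delta>) (\<lambda>(x, v). f x v)" "z \<in> interior (cball z \<delta>)"
    by (auto intro: lipschitz_on_continuous_on)
  then show "isCont (\<lambda>(x, v). f x v) z" by (rule continuous_on_interior)
qed

lemma loc_lipschitz_bounded_near:
  assumes "loc_lipschitz f" "compact U" "compact Q"
  obtains M where "M > 0" "\<forall>p\<in>nbhd 1 Q. \<forall>v\<in>U. norm (f p v) \<le> M"
proof -
  have "compact ((\<lambda>(x, v). f x v) ` (nbhd 1 Q \<times> U))"
    using loc_lipschitz_continuous[OF assms(1)] compact_nbhd[OF assms(3)] assms(2)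
    by (intro compact_continuous_image compact_Times) (auto elim: continuous_on_subset)
  then obtain B where "\<forall>w\<in>(\<lambda>(x, v). f x v) ` (nbhd 1 Q \<times> U). norm w \<le> B"
    using compact_imp_bounded bounded_iff by metis
  then show ?thesis using that[of "max B 1"] by force
qed

lemma recurrent_stays_near:
  assumes speed: "\<forall>p\<in>nbhd 1 Q. \<forall>v\<in>U. norm (f p v) \<le> M" and "0 \<le> M"
    and "0 < \<tau>" "0 \<le> \<epsilon>" and small: "\<epsilon> + M * \<tau> < 1"
    and "x \<in> Q" and uU: "\<forall>t\<ge>0. u t \<in> U"
    and sol: "is_sol f x u {0..T} y" and "T \<ge> \<tau>"
    and rec: "\<forall>t\<in>{0..T - \<tau>}. \<exists>t'\<in>{t..t + \<tau>}. y t' \<in> nbhd \<epsilon> Q"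
    and s: "s \<in> {0..T}"
  shows "y s \<in> nbhd (\<epsilon> + M * \<tau>) Q"
proof -
  obtain t' where t': "0 \<le> t'" "t' \<le> s" "s - t' \<le> \<tau>" "y t' \<in> nbhd \<epsilon> Q"
  proof (cases "s < \<tau>")
    case True
    have "y 0 \<in> nbhd \<epsilon> Q"
      using is_sol_initial[OF sol] assms unfolding nbhd_def by force
    then show ?thesis using that[of 0] True s by auto
  next
    case False
    then obtain t' where "t' \<in> {s - \<tau>..s}" "y t' \<in> nbhd \<epsilon> Q"
      using rec[rule_format, of "s - \<tau>"] s by auto
    then show ?thesis using that[of t'] False by auto
  qed
  obtain x0 where x0: "x0 \<in> Q" "norm (x0 - y t') \<le> \<epsilon>" using t'(4) unfolding nbhd_def by auto
  have shift: "M * (s - t') \<le> M * \<tau>" using \<open>0 \<le> M\<close> t' by (intro mult_left_mono) auto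
  have "norm (y s - y t') \<le> M * (s - t')"
    using is_sol_displacement_bound[OF speed \<open>0 \<le> M\<close> sol uU _ _ _ t'(4)] t' s shift small by auto
  then have "norm (x0 - y s) \<le> \<epsilon> + M * \<tau>"
    using norm_triangle_ineq[of "x0 - y t'" "y t' - y s"] x0 shift
    by (simp add: norm_minus_commute)
  then show ?thesis unfolding nbhd_def using x0 by auto
qed

lemma rec_spanning_imp_inv_spanning:
  assumes speed: "\<forall>p\<in>nbhd 1 Q. \<forall>v\<in>U. norm (f p v) \<le> M" and "0 \<le> M"
    and "0 < \<tau>" "0 \<le> \<epsilon>" "\<epsilon> + M * \<tau> < 1"
    and S: "rec_spanning f U T \<epsilon> \<tau> Q S"
  shows "inv_spanning f U T (\<epsilon> + M * \<tau>) Q S"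
  unfolding inv_spanning_def
proof (intro conjI ballI)
  show "S \<subseteq> controls U" using S unfolding rec_spanning_def by auto
  fix x assume "x \<in> Q"
  then obtain u y where "u \<in> S" "T \<ge> \<tau>" "is_sol f x u {0..T} y"
    "\<forall>t\<in>{0..T - \<tau>}. \<exists>t'\<in>{t..t + \<tau>}. y t' \<in> nbhd \<epsilon> Q"
    using S unfolding rec_spanning_def recurrent_def by blast
  moreover have "\<forall>t\<ge>0. u t \<in> U" using \<open>u \<in> S\<close> S unfolding rec_spanning_def controls_def by auto
  ultimately show "\<exists>u\<in>S. \<exists>y. is_sol f x u {0..T} y \<and> (\<forall>t\<in>{0..T}. y t \<in> nbhd (\<epsilon> + M * \<tau>) Q)"
    using recurrent_stays_near[OF speed] assms \<open>x \<in> Q\<close> by blast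
qed

lemma inv_spanning_imp_rec_spanning:
  assumes "0 < \<tau>" "\<tau> \<le> T" and S: "inv_spanning f U T \<epsilon> Q S"
  shows "rec_spanning f U T \<epsilon> \<tau> Q S"
  unfolding rec_spanning_def
proof (intro conjI ballI)
  show "S \<subseteq> controls U" using S unfolding inv_spanning_def by auto
  fix x assume "x \<in> Q"
  then obtain u y where "u \<in> S" "is_sol f x u {0..T} y" and near: "\<forall>t\<in>{0..T}. y t \<in> nbhd \<epsilon> Q"
    using S unfolding inv_spanning_def by blast
  moreover have "\<forall>t\<in>{0..T - \<tau>}. \<exists>t'\<in>{t..t + \<tau>}. y t' \<in> nbhd \<epsilon> Q"
    using near \<open>0 < \<tau>\<close> by (auto intro!: bexI)
  ultimately show "\<exists>u\<in>S. recurrent f x u T \<epsilon> \<tau> Q"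
    unfolding recurrent_def using assms by blast
qed

lemma r_inv_le_r_rec:
  assumes "\<forall>p\<in>nbhd 1 Q. \<forall>v\<in>U. norm (f p v) \<le> M" "0 \<le> M" "0 < \<tau>" "0 \<le> \<epsilon>" "\<epsilon> + M * \<tau> < 1"
  shows "r_inv f U T (\<epsilon> + M * \<tau>) Q \<le> r_rec f U T \<epsilon> \<tau> Q"
  unfolding r_rec_def r_inv_def
  by (rule INF_superset_mono) (use rec_spanning_imp_inv_spanning[OF assms] in auto)

lemma r_rec_le_r_inv:
  assumes "0 < \<tau>" "\<tau> \<le> T"
  shows "r_rec f U T \<epsilon> \<tau> Q \<le> r_inv f U T \<epsilon> Q"
  unfolding r_rec_def r_inv_def
  by (rule INF_superset_mono) (use inv_spanning_imp_rec_spanning[OF assms] in auto)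

lemma r_inv_antimono:
  assumes "e1 \<le> e2" shows "r_inv f U T e2 Q \<le> r_inv f U T e1 Q"
  unfolding r_inv_def
  by (rule INF_superset_mono) (use nbhd_mono[OF assms, of Q] in \<open>auto simp: inv_spanning_def, blast\<close>)

lemma r_rec_antimono:
  assumes "e1 \<le> e2" shows "r_rec f U T e2 \<tau> Q \<le> r_rec f U T e1 \<tau> Q"
proof -
  have "recurrent f x u T e1 \<tau> Q \<Longrightarrow> recurrent f x u T e2 \<tau> Q" for x u
    using nbhd_mono[OF assms, of Q] unfolding recurrent_def by blast
  then have "rec_spanning f U T e1 \<tau> Q S \<Longrightarrow> rec_spanning f U T e2 \<tau> Q S" for S
    unfolding rec_spanning_def by blast
  then show ?thesis
    unfolding r_rec_def by (intro INF_superset_mono) auto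
qed

lemma elog2_mono: "r1 \<le> r2 \<Longrightarrow> elog2 r1 \<le> elog2 r2"
  by (cases r1; cases r2) (auto simp: elog2_def)

definition growth_rate :: "(real \<Rightarrow> ereal) \<Rightarrow> ereal" where
  "growth_rate r = Limsup at_top (\<lambda>T. ereal (1 / T) * elog2 (r T))"

lemma growth_rate_mono:
  assumes "\<forall>\<^sub>F T in at_top. r1 T \<le> r2 T"
  shows "growth_rate r1 \<le> growth_rate r2"
  unfolding growth_rate_def
proof (rule Limsup_mono)
  show "\<forall>\<^sub>F T in at_top. ereal (1 / T) * elog2 (r1 T) \<le> ereal (1 / T) * elog2 (r2 T)"
    using assms eventually_gt_at_top[of 0]
    by eventually_elim (auto intro: ereal_mult_left_mono elog2_mono)
qed

lemma tendsto_SUP_at_right_antimono: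
  fixes g :: "real \<Rightarrow> ereal"
  assumes "\<And>a b. 0 < a \<Longrightarrow> a \<le> b \<Longrightarrow> g b \<le> g a"
  shows "(g \<longlongrightarrow> (SUP e\<in>{0<..}. g e)) (at_right 0)"
proof (rule increasing_tendsto)
  show "\<forall>\<^sub>F e in at_right 0. g e \<le> (SUP e\<in>{0<..}. g e)"
    by (rule eventually_mono[OF eventually_at_right_less]) (auto intro: SUP_upper)
  fix y assume "y < (SUP e\<in>{0<..}. g e)"
  then obtain e where "e > 0" "y < g e" by (auto simp: less_SUP_iff)
  then show "\<forall>\<^sub>F x in at_right 0. y < g x"
    using eventually_at_right_real[OF \<open>e > 0\<close>] assms[of _ e]
    by (auto elim!: eventually_mono intro: less_le_trans)
qed

lemma Lim_at_right_antimono: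
  fixes g :: "real \<Rightarrow> ereal"
  assumes "\<And>a b. 0 < a \<Longrightarrow> a \<le> b \<Longrightarrow> g b \<le> g a"
  shows "Lim (at_right 0) g = (SUP e\<in>{0<..}. g e)"
  by (rule tendsto_Lim[OF trivial_limit_at_right_real tendsto_SUP_at_right_antimono[OF assms]])

lemma h_inv_eq_SUP: "h_inv f U Q = (SUP e\<in>{0<..}. growth_rate (\<lambda>T. r_inv f U T e Q))"
proof -
  have "h_inv f U Q = Lim (at_right 0) (\<lambda>e. growth_rate (\<lambda>T. r_inv f U T e Q))"
    by (simp add: h_inv_def growth_rate_def)
  also have "\<dots> = (SUP e\<in>{0<..}. growth_rate (\<lambda>T. r_inv f U T e Q))"
    by (intro Lim_at_right_antimono growth_rate_mono always_eventually allI r_inv_antimono)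
  finally show ?thesis .
qed

lemma h_rec_eq_SUP: "h_rec f U \<tau> Q = (SUP e\<in>{0<..}. growth_rate (\<lambda>T. r_rec f U T e \<tau> Q))"
proof -
  have "h_rec f U \<tau> Q = Lim (at_right 0) (\<lambda>e. growth_rate (\<lambda>T. r_rec f U T e \<tau> Q))"
    by (simp add: h_rec_def growth_rate_def)
  also have "\<dots> = (SUP e\<in>{0<..}. growth_rate (\<lambda>T. r_rec f U T e \<tau> Q))"
    by (intro Lim_at_right_antimono growth_rate_mono always_eventually allI r_rec_antimono)
  finally show ?thesis .
qed

lemma tendsto_SUP_squeeze:
  fixes F :: "real \<Rightarrow> ereal" and G :: "real \<Rightarrow> real \<Rightarrow> ereal"
  assumes F_antimono: "\<And>a b. 0 < a \<Longrightarrow> a \<le> b \<Longrightarrow> F b \<le> F a"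
    and G_le_F: "\<And>\<tau> e. 0 < \<tau> \<Longrightarrow> 0 < e \<Longrightarrow> G \<tau> e \<le> F e"
    and F_le_G: "\<And>\<tau> e. 0 < \<tau> \<Longrightarrow> 0 < e \<Longrightarrow> e + c * \<tau> < 1 \<Longrightarrow> F (e + c * \<tau>) \<le> G \<tau> e"
    and "0 < c"
  shows "((\<lambda>\<tau>. SUP e\<in>{0<..}. G \<tau> e) \<longlongrightarrow> (SUP e\<in>{0<..}. F e)) (at_right 0)"
proof (rule increasing_tendsto)
  show "\<forall>\<^sub>F \<tau> in at_right 0. (SUP e\<in>{0<..}. G \<tau> e) \<le> (SUP e\<in>{0<..}. F e)"
    by (rule eventually_mono[OF eventually_at_right_less]) (auto intro!: SUP_mono G_le_F)
  fix y assume "y < (SUP e\<in>{0<..}. F e)"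
  then obtain e0 where "e0 > 0" "y < F e0" by (auto simp: less_SUP_iff)
  define e1 where "e1 = min e0 (1/2)"
  have e1: "0 < e1" "e1 < 1" "y < F e1"
    using \<open>e0 > 0\<close> \<open>y < F e0\<close> F_antimono[of e1 e0] unfolding e1_def by auto
  show "\<forall>\<^sub>F \<tau> in at_right 0. y < (SUP e\<in>{0<..}. G \<tau> e)"
    using eventually_at_right_real[of 0 "e1 / c"] \<open>0 < c\<close> e1
  proof (auto elim!: eventually_mono)
    fix \<tau> assume "0 < \<tau>" "\<tau> < e1 / c"
    then have e: "0 < e1 - c * \<tau>" "(e1 - c * \<tau>) + c * \<tau> = e1"
      using \<open>0 < c\<close> by (auto simp: field_simps)
    have "y < F e1" by (fact e1(3))
    also have "\<dots> \<le> G \<tau> (e1 - c * \<tau>)" using F_le_G[of \<tau> "e1 - c * \<tau>"] e e1 \<open>0 < \<tau>\<close> by simp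
    also have "\<dots> \<le> (SUP e\<in>{0<..}. G \<tau> e)" using e by (intro SUP_upper) auto
    finally show "y < (SUP e\<in>{0<..}. G \<tau> e)" .
  qed
qed

theorem corollary1:
  fixes f :: "real^'n \<Rightarrow> real^'m \<Rightarrow> real^'n"
    and U :: "(real^'m) set"
    and Q :: "(real^'n) set"
  assumes "loc_lipschitz f"
    and "compact U"
    and "compact Q"
    and "controlled_invariant f U Q"
  shows "((\<lambda>\<tau>. h_rec f U \<tau> Q) \<longlongrightarrow> h_inv f U Q) (at_right 0)"
proof -
  obtain M where "M > 0" and speed: "\<forall>p\<in>nbhd 1 Q. \<forall>v\<in>U. norm (f p v) \<le> M"
    using loc_lipschitz_bounded_near[OF assms(1-3)] by blast
  show ?thesis
    unfolding h_inv_eq_SUP h_rec_eq_SUP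
  proof (rule tendsto_SUP_squeeze[OF _ _ _ \<open>M > 0\<close>])
    show "growth_rate (\<lambda>T. r_inv f U T b Q) \<le> growth_rate (\<lambda>T. r_inv f U T a Q)"
      if "a \<le> b" for a b
      by (intro growth_rate_mono always_eventually allI r_inv_antimono that)
    show "growth_rate (\<lambda>T. r_rec f U T e \<tau> Q) \<le> growth_rate (\<lambda>T. r_inv f U T e Q)"
      if "0 < \<tau>" for \<tau> e
      using that by (intro growth_rate_mono eventually_mono[OF eventually_ge_at_top[of \<tau>]] r_rec_le_r_inv)
    show "growth_rate (\<lambda>T. r_inv f U T (e + M * \<tau>) Q) \<le> growth_rate (\<lambda>T. r_rec f U T e \<tau> Q)"
      if "0 < \<tau>" "0 < e" "e + M * \<tau> < 1" for \<tau> e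
      using that \<open>M > 0\<close> by (intro growth_rate_mono always_eventually allI r_inv_le_r_rec[OF speed]) auto
  qed
qed

end
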